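(* Let $W=\mathfrak{S}_n$, $\ast=\mathrm{id}$, and let $w\in I_\ast$. Then any two reduced $I_\ast$-expressions for $w$ can be transformed into each other through a finite series of braid $I_\ast$-transformations (each intermediate sequence being a reduced $I_\ast$-expression for $w$).
   Context: $\mathfrak{S}_n$ is the symmetric group with simple transpositions $s_i=(i,i+1)$, $1\le i<n$, $S=\{s_1,\dots,s_{n-1}\}$; $I_\ast=\{w\in\mathfrak{S}_n:w^2=1\}$. For $s\in S$ and $w\in I_\ast$ set $s\ltimes w=sw$ if $sw=ws$, and $s\ltimes w=sws$ if $sw\neq ws$ (so $s\ltimes 1=s$); iterated: $s_{i_1}\ltimes s_{i_2}\ltimes\cdots\ltimes s_{i_k}\ltimes w=s_{i_1}\ltimes(s_{i_2}\ltimes(\cdots(s_{i_k}\ltimes w)\cdots))$. A sequence $(s_{i_1},\dots,s_{i_k})$ is an $I_\ast$-expression for $w$ if $w=s_{i_1}\ltimes\cdots\ltimes s_{i_k}\ltimes 1$ (the empty sequence being an expression for $1$); it is reduced if $k$ is minimal among all $I_\ast$-expressions of $w$; this minimal $k$ is denoted $\rho(w)$. A braid $I_\ast$-transformation of a reduced $I_\ast$-expression is one of: (i) replacing a consecutive block $(s_j,s_{j+1},s_j)$ by $(s_{j+1},s_j,s_{j+1})$ or vice versa ($1\le j<n-1$); (ii) replacing a consecutive block $(s_b,s_c)$ with $|b-c|>1$ by $(s_c,s_b)$; (iii) replacing the last two entries $(s_k,s_{k+1})$ of the sequence by $(s_{k+1},s_k)$ or vice versa ($1\le k<n-1$); in each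 case both the original and the resulting sequences are required to be reduced. *)

theory Defs
  imports "HOL-Combinatorics.Combinatorics"
begin

(* S_n is realised as the permutations of {1..n} (functions nat => nat permuting {1..n});
   the simple transposition s_i = (i, i+1) is encoded by its index i (1 <= i < n). *)

definition sref :: "nat \<Rightarrow> (nat \<Rightarrow> nat)" where
  "sref i = transpose i (Suc i)"

definition Istar :: "nat \<Rightarrow> (nat \<Rightarrow> nat) set" where
  "Istar n = {w. w permutes {1..n} \<and> w \<circ> w = id}"

definition ltimes :: "nat \<Rightarrow> (nat \<Rightarrow> nat) \<Rightarrow> (nat \<Rightarrow> nat)" where
  "ltimes i w = (if sref i \<circ> w = w \<circ> sref i then sref i \<circ> w else sref i \<circ> w \<circ> sref i)"

definition expr_val :: "nat list \<Rightarrow> (nat \<Rightarrow> nat)" where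
  "expr_val xs = foldr ltimes xs id"

definition is_Iexpr :: "nat \<Rightarrow> nat list \<Rightarrow> (nat \<Rightarrow> nat) \<Rightarrow> bool" where
  "is_Iexpr n xs w \<longleftrightarrow> set xs \<subseteq> {1..<n} \<and> expr_val xs = w"

definition reduced_Iexpr :: "nat \<Rightarrow> nat list \<Rightarrow> (nat \<Rightarrow> nat) \<Rightarrow> bool" where
  "reduced_Iexpr n xs w \<longleftrightarrow> is_Iexpr n xs w \<and> (\<forall>ys. is_Iexpr n ys w \<longrightarrow> length xs \<le> length ys)"

definition braid_step :: "nat \<Rightarrow> nat list \<Rightarrow> nat list \<Rightarrow> bool" where
  "braid_step n xs ys \<longleftrightarrow>
     reduced_Iexpr n xs (expr_val xs) \<and> reduced_Iexpr n ys (expr_val ys) \<and>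
     ((\<exists>a b j. 1 \<le> j \<and> j + 1 < n \<and>
        ((xs = a @ [j, j+1, j] @ b \<and> ys = a @ [j+1, j, j+1] @ b) \<or>
         (xs = a @ [j+1, j, j+1] @ b \<and> ys = a @ [j, j+1, j] @ b)))
    \<or> (\<exists>a c b d. (b > d + 1 \<or> d > b + 1) \<and>
        xs = a @ [b, d] @ c \<and> ys = a @ [d, b] @ c)
    \<or> (\<exists>a k. 1 \<le> k \<and> k + 1 < n \<and>
        ((xs = a @ [k, k+1] \<and> ys = a @ [k+1, k]) \<or>
         (xs = a @ [k+1, k] \<and> ys = a @ [k, k+1]))))"

end

theory Submission
  imports Defs
begin

text \<open>The statistic \<open>inv_exc\<close> (inversions plus excedances) changes by exactly \<open>2\<close> under
  \<open>s\<^sub>i \<ltimes> -\<close>: it goes up if \<open>i\<close> is an ascent of \<open>w\<close> and down if \<open>i\<close> is a descent. Hence an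
  \<open>I\<^sub>*\<close>-expression is reduced iff twice its length is \<open>inv_exc w\<close>, and the first letters of the
  reduced expressions of \<open>w\<close> are exactly its descents. The theorem then follows by induction on
  the length, as for Matsumoto's theorem: reduced expressions with the same first letter \<open>s\<^sub>i\<close> are
  connected by the induction hypothesis for \<open>s\<^sub>i \<ltimes> w\<close>, and for two descents \<open>i < j\<close> one finds
  reduced expressions beginning with \<open>s\<^sub>i\<close> and with \<open>s\<^sub>j\<close> that differ by one commutation
  (\<open>j > i + 1\<close>) or one braid relation (\<open>j = i + 1\<close>). Where these relations fail for \<open>\<ltimes>\<close> one
  passes through a third descent, or, if \<open>s\<^sub>i \<ltimes> s\<^sub>j \<ltimes> w = 1\<close>, uses the terminal move (iii).\<close>

section \<open>Simple reflections and the twisted action\<close>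

lemma sref_apply: "sref i y = (if y = i then Suc i else if y = Suc i then i else y)"
  by (simp add: sref_def transpose_def)

lemma sref_sref [simp]: "sref i (sref i y) = y"
  by (simp add: sref_apply)

lemma sref_other: "y \<noteq> i \<Longrightarrow> y \<noteq> Suc i \<Longrightarrow> sref i y = y"
  by (simp add: sref_apply)

lemma sref_eq_other_iff: "y \<noteq> i \<Longrightarrow> y \<noteq> Suc i \<Longrightarrow> sref i z = y \<longleftrightarrow> z = y"
  by (auto simp: sref_apply)

lemma sref_less_iff:
  assumes "z \<noteq> y" "\<not> (z = i \<and> y = Suc i)" "\<not> (z = Suc i \<and> y = i)"
  shows "sref i y < sref i z \<longleftrightarrow> y < z"
  using assms by (auto simp: sref_apply)

lemma sref_commute_far: "Suc i < j \<Longrightarrow> sref j (sref i z) = sref i (sref j z)"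
  by (simp add: sref_apply)

lemma sref_braid: "sref x (sref (Suc x) (sref x z)) = sref (Suc x) (sref x (sref (Suc x) z))"
  by (simp add: sref_apply)

lemma sref_permutes: "1 \<le> i \<Longrightarrow> i < n \<Longrightarrow> sref i permutes {1..n}"
  unfolding sref_def by (rule permutes_swap_id) auto

definition involution :: "('a \<Rightarrow> 'a) \<Rightarrow> bool" where
  "involution w \<longleftrightarrow> (\<forall>k. w (w k) = k)"

lemma involutionD: "involution w \<Longrightarrow> w (w k) = k"
  by (simp add: involution_def)

lemma involution_eq_iff: "involution w \<Longrightarrow> w a = w b \<longleftrightarrow> a = b"
  unfolding involution_def by metis

text \<open>For an involution \<open>w\<close> this is exactly the condition \<open>s\<^sub>i w = w s\<^sub>i\<close>
  selecting the first branch of \<open>ltimes\<close>.\<close>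

definition stabilises_pair :: "nat \<Rightarrow> (nat \<Rightarrow> nat) \<Rightarrow> bool" where
  "stabilises_pair i w \<longleftrightarrow> w i = Suc i \<or> (w i = i \<and> w (Suc i) = Suc i)"

lemma sref_commute_iff:
  assumes "involution w"
  shows "sref i \<circ> w = w \<circ> sref i \<longleftrightarrow> stabilises_pair i w"
proof
  assume "sref i \<circ> w = w \<circ> sref i"
  then have "sref i (w i) = w (Suc i)" by (metis comp_apply sref_apply)
  then show "stabilises_pair i w"
    using involutionD[OF assms, of i] involutionD[OF assms, of "Suc i"]
    by (auto simp: stabilises_pair_def sref_apply split: if_splits)
next
  assume "stabilises_pair i w"
  then show "sref i \<circ> w = w \<circ> sref i"
    using involutionD[OF assms] unfolding stabilises_pair_def
    by (auto simp: fun_eq_iff sref_apply) (metis n_not_Suc_n)+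
qed

lemma ltimes_stabilises: "involution w \<Longrightarrow> stabilises_pair i w \<Longrightarrow> ltimes i w = sref i \<circ> w"
  by (simp add: ltimes_def sref_commute_iff)

lemma ltimes_not_stabilises:
  "involution w \<Longrightarrow> \<not> stabilises_pair i w \<Longrightarrow> ltimes i w = sref i \<circ> w \<circ> sref i"
  by (simp add: ltimes_def sref_commute_iff)

lemma ltimes_apply:
  "involution w \<Longrightarrow> ltimes i w y = (if stabilises_pair i w then sref i (w y) else sref i (w (sref i y)))"
  by (simp add: ltimes_def sref_commute_iff)

lemma ltimes_apply_other:
  "involution w \<Longrightarrow> y \<noteq> i \<Longrightarrow> y \<noteq> Suc i \<Longrightarrow> ltimes i w y = sref i (w y)"
  by (simp add: ltimes_apply sref_other)

lemma ltimes_ltimes [simp]: "ltimes i (ltimes i w) = w"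
proof (cases "sref i \<circ> w = w \<circ> sref i")
  case True
  then have "sref i \<circ> (sref i \<circ> w) = (sref i \<circ> w) \<circ> sref i"
    by (simp add: fun_eq_iff)
  with True show ?thesis by (simp add: ltimes_def fun_eq_iff)
next
  case False
  have conj: "ltimes i w = sref i \<circ> w \<circ> sref i"
    using False by (simp add: ltimes_def)
  have "sref i \<circ> (sref i \<circ> w \<circ> sref i) \<noteq> (sref i \<circ> w \<circ> sref i) \<circ> sref i"
  proof
    assume "sref i \<circ> (sref i \<circ> w \<circ> sref i) = (sref i \<circ> w \<circ> sref i) \<circ> sref i"
    then have "w \<circ> sref i = sref i \<circ> w" by (simp add: fun_eq_iff)
    with False show False by simp
  qed
  then have "ltimes i (sref i \<circ> w \<circ> sref i) = sref i \<circ> (sref i \<circ> w \<circ> sref i) \<circ> sref i"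
    unfolding ltimes_def by (rule if_not_P)
  then show ?thesis by (simp add: conj fun_eq_iff)
qed

lemma involution_ltimes:
  assumes "involution w"
  shows "involution (ltimes i w)"
proof (cases "sref i \<circ> w = w \<circ> sref i")
  case True
  then have "sref i (w k) = w (sref i k)" for k by (metis comp_apply)
  with assms show ?thesis by (simp add: involution_def ltimes_def True)
next
  case False
  with assms show ?thesis by (simp add: involution_def ltimes_def)
qed

lemma Istar_involution: "w \<in> Istar n \<Longrightarrow> involution w"
  unfolding Istar_def involution_def by (auto simp: fun_eq_iff dest: fun_cong)

lemma Istar_permutes: "w \<in> Istar n \<Longrightarrow> w permutes {1..n}"
  unfolding Istar_def by auto

lemma id_Istar: "id \<in> Istar n"
  unfolding Istar_def by (simp add: permutes_id)

lemma ltimes_Istar: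
  assumes w: "w \<in> Istar n" and i: "1 \<le> i" "i < n"
  shows "ltimes i w \<in> Istar n"
proof -
  have "ltimes i w permutes {1..n}"
    using Istar_permutes[OF w] sref_permutes[OF i]
    by (auto simp: ltimes_def intro: permutes_compose)
  moreover have "ltimes i w \<circ> ltimes i w = id"
    using involution_ltimes[OF Istar_involution[OF w]] by (simp add: involution_def fun_eq_iff)
  ultimately show ?thesis by (simp add: Istar_def)
qed

lemma expr_val_Nil [simp]: "expr_val [] = id"
  by (simp add: expr_val_def)

lemma expr_val_Cons [simp]: "expr_val (i # xs) = ltimes i (expr_val xs)"
  by (simp add: expr_val_def)

lemma expr_val_append: "expr_val (a @ xs) = foldr ltimes a (expr_val xs)"
  by (simp add: expr_val_def)

lemma expr_val_Istar: "set xs \<subseteq> {1..<n} \<Longrightarrow> expr_val xs \<in> Istar n"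
  by (induction xs) (auto simp: id_Istar intro: ltimes_Istar)

lemma ltimes_descent_iff:
  assumes w: "involution w"
  shows "ltimes i w i < ltimes i w (Suc i) \<longleftrightarrow> w (Suc i) < w i"
proof (cases "stabilises_pair i w")
  case True
  then show ?thesis using involutionD[OF w, of i] involutionD[OF w, of "Suc i"]
    by (auto simp: ltimes_apply[OF w] sref_apply stabilises_pair_def)
next
  case False
  then have "\<not> (w i = i \<and> w (Suc i) = Suc i)" "\<not> (w i = Suc i \<and> w (Suc i) = i)"
    by (auto simp: stabilises_pair_def)
  with False show ?thesis
    using sref_less_iff[of "w i" "w (Suc i)" i] involution_eq_iff[OF w, of i "Suc i"]
    by (simp add: ltimes_apply[OF w] sref_apply)
qed

lemma ltimes_commute_far:
  assumes w: "involution w" and ij: "Suc i < j"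
  shows "ltimes i (ltimes j w) = ltimes j (ltimes i w)"
proof -
  have "stabilises_pair i (ltimes j w) \<longleftrightarrow> stabilises_pair i w"
    "stabilises_pair j (ltimes i w) \<longleftrightarrow> stabilises_pair j w"
    using ij by (simp_all add: stabilises_pair_def ltimes_apply_other[OF w] sref_eq_other_iff)
  then show ?thesis using ij
    by (simp add: fun_eq_iff ltimes_apply[OF involution_ltimes[OF w]] ltimes_apply[OF w]
        sref_commute_far)
qed

lemma braid_descents:
  assumes w: "involution w" and "w (Suc x) < w x" "w (Suc (Suc x)) < w (Suc x)"
    and "w x \<noteq> Suc (Suc x)"
  shows "ltimes x w (Suc (Suc x)) < ltimes x w (Suc x)"
    and "ltimes (Suc x) (ltimes x w) (Suc x) < ltimes (Suc x) (ltimes x w) x"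
proof -
  have "w (Suc (Suc x)) \<noteq> x" "w (Suc x) = x \<longleftrightarrow> w x = Suc x"
    "w (Suc (Suc x)) = Suc x \<longleftrightarrow> w (Suc x) = Suc (Suc x)"
    using assms(4) involutionD[OF w] by metis+
  with assms show "ltimes x w (Suc (Suc x)) < ltimes x w (Suc x)"
    and "ltimes (Suc x) (ltimes x w) (Suc x) < ltimes (Suc x) (ltimes x w) x"
    by (cases "w x = Suc x"; cases "w (Suc x) = Suc (Suc x)";
        simp add: ltimes_apply involution_ltimes stabilises_pair_def sref_apply)+
qed

text \<open>The braid relation for \<open>\<ltimes>\<close> fails in general (e.g. at \<open>w = 1\<close>); it holds when
  \<open>x\<close> and \<open>x + 1\<close> are descents of \<open>w\<close>, except in the configuration \<open>w x = x + 2\<close>.\<close>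

lemma braid_ltimes:
  assumes w: "involution w" and d: "w (Suc x) < w x" "w (Suc (Suc x)) < w (Suc x)"
    and ne: "w x \<noteq> Suc (Suc x)"
  shows "ltimes x (ltimes (Suc x) (ltimes x w)) = ltimes (Suc x) (ltimes x (ltimes (Suc x) w))"
proof -
  have inv: "w (w k) = k" for k using involutionD[OF w] .
  have w1: "involution (ltimes x w)" "involution (ltimes (Suc x) w)"
    using w by (simp_all add: involution_ltimes)
  have w2: "involution (ltimes (Suc x) (ltimes x w))" "involution (ltimes x (ltimes (Suc x) w))"
    using w1 by (simp_all add: involution_ltimes)
  note eval = ltimes_apply w w1 w2 stabilises_pair_def sref_apply
  consider "w x = Suc x" | "w (Suc x) = Suc (Suc x)" | "w x \<noteq> Suc x" "w (Suc x) \<noteq> Suc (Suc x)"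
    by blast
  then show ?thesis
  proof cases
    case 1
    then have "w (Suc x) = x" using inv by metis
    then have "stabilises_pair x w" "\<not> stabilises_pair (Suc x) (ltimes x w)"
      "\<not> stabilises_pair x (ltimes (Suc x) (ltimes x w))" "\<not> stabilises_pair (Suc x) w"
      "\<not> stabilises_pair x (ltimes (Suc x) w)" "stabilises_pair (Suc x) (ltimes x (ltimes (Suc x) w))"
      using 1 d by (simp_all add: eval)
    then show ?thesis by (simp add: fun_eq_iff ltimes_apply w w1 w2 sref_braid)
  next
    case 2
    then have "w (Suc (Suc x)) = Suc x" using inv by metis
    then have "\<not> stabilises_pair x w" "\<not> stabilises_pair (Suc x) (ltimes x w)"
      "stabilises_pair x (ltimes (Suc x) (ltimes x w))" "stabilises_pair (Suc x) w"
      "\<not> stabilises_pair x (ltimes (Suc x) w)" "\<not> stabilises_pair (Suc x) (ltimes x (ltimes (Suc x) w))"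
      using 2 d by (simp_all add: eval)
    then show ?thesis by (simp add: fun_eq_iff ltimes_apply w w1 w2 sref_braid)
  next
    case 3
    then have "w (Suc (Suc x)) \<noteq> x" "w (Suc (Suc x)) \<noteq> Suc x" "w (Suc x) \<noteq> x"
      using inv ne by metis+
    then have "\<not> stabilises_pair x w" "\<not> stabilises_pair (Suc x) (ltimes x w)"
      "\<not> stabilises_pair x (ltimes (Suc x) (ltimes x w))" "\<not> stabilises_pair (Suc x) w"
      "\<not> stabilises_pair x (ltimes (Suc x) w)" "\<not> stabilises_pair (Suc x) (ltimes x (ltimes (Suc x) w))"
      using 3 d ne by (simp_all add: eval)
    then show ?thesis by (simp add: fun_eq_iff ltimes_apply w w1 w2 sref_braid)
  qed
qed

lemma ltimes_exceptional:
  assumes w: "involution w" and E: "w x = Suc (Suc x)" "w (Suc x) = Suc x"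
  defines "v \<equiv> \<lambda>y. if y \<in> {x, Suc x, Suc (Suc x)} then y else w y"
  shows "ltimes (Suc x) (ltimes x w) = v" and "ltimes x (ltimes (Suc x) w) = v"
    and "ltimes x w (Suc (Suc x)) < ltimes x w (Suc x)"
    and "ltimes (Suc x) w (Suc x) < ltimes (Suc x) w x"
proof -
  have c: "w (Suc (Suc x)) = x" using involutionD[OF w, of x] E by simp
  have out: "w y \<notin> {x, Suc x, Suc (Suc x)}" if "y \<notin> {x, Suc x, Suc (Suc x)}" for y
    using that involutionD[OF w, of y] E c by auto
  note eval = ltimes_apply w involution_ltimes stabilises_pair_def sref_apply
  show "ltimes (Suc x) (ltimes x w) = v" "ltimes x (ltimes (Suc x) w) = v"
    using E c out by (auto simp: fun_eq_iff v_def eval)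
  show "ltimes x w (Suc (Suc x)) < ltimes x w (Suc x)"
    "ltimes (Suc x) w (Suc x) < ltimes (Suc x) w x"
    using E c by (simp_all add: eval)
qed

section \<open>Inversions, excedances and reduced expressions\<close>

definition inversions :: "nat \<Rightarrow> (nat \<Rightarrow> nat) \<Rightarrow> (nat \<times> nat) set" where
  "inversions n f = {(a, b). a \<in> {1..n} \<and> b \<in> {1..n} \<and> a < b \<and> f b < f a}"

definition excedances :: "nat \<Rightarrow> (nat \<Rightarrow> nat) \<Rightarrow> nat set" where
  "excedances n f = {a \<in> {1..n}. a < f a}"

text \<open>On \<open>I\<^sub>*\<close> this statistic equals \<open>2 \<rho>\<close>.\<close>

definition inv_exc :: "nat \<Rightarrow> (nat \<Rightarrow> nat) \<Rightarrow> nat" where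
  "inv_exc n f = card (inversions n f) + card (excedances n f)"

lemma finite_inversions [simp]: "finite (inversions n f)"
  by (rule finite_subset[of _ "{1..n} \<times> {1..n}"]) (auto simp: inversions_def)

lemma inv_exc_id [simp]: "inv_exc n id = 0"
proof -
  have "inversions n id = {}" by (auto simp: inversions_def)
  then show ?thesis by (simp add: inv_exc_def excedances_def)
qed

lemma card_inversions_sref_comp:
  assumes f: "f permutes {1..n}" and i: "1 \<le> i" "i < n"
    and p: "f p = i" and q: "f q = Suc i" and pq: "p < q"
  shows "card (inversions n (sref i \<circ> f)) = card (inversions n f) + 1"
proof -
  have inj: "f a = f b \<longleftrightarrow> a = b" for a b
    using permutes_inj[OF f] by (auto dest: injD)
  have pq_in: "p \<in> {1..n}" "q \<in> {1..n}"
    using permutes_in_image[OF f, of p] permutes_in_image[OF f, of q] p q i by auto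
  have swap: "sref i (f b) < sref i (f a) \<longleftrightarrow> f b < f a"
    if "a \<noteq> b" "{a, b} \<noteq> {p, q}" for a b
  proof (rule sref_less_iff)
    show "f a \<noteq> f b" using that(1) inj by simp
    show "\<not> (f a = i \<and> f b = Suc i)" "\<not> (f a = Suc i \<and> f b = i)"
      using that(2) p q inj by (metis insert_commute)+
  qed
  have "(a, b) \<in> inversions n (sref i \<circ> f) \<longleftrightarrow> (a, b) \<in> insert (p, q) (inversions n f)" for a b
  proof (cases "(a, b) = (p, q)")
    case True
    then show ?thesis using pq pq_in p q by (simp add: inversions_def sref_apply)
  next
    case False
    then have "{a, b} \<noteq> {p, q} \<or> \<not> a < b" using pq by (auto simp: doubleton_eq_iff)
    then show ?thesis using swap[of a b] False by (auto simp: inversions_def)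
  qed
  then have "inversions n (sref i \<circ> f) = insert (p, q) (inversions n f)"
    by auto
  moreover have "(p, q) \<notin> inversions n f"
    using p q by (simp add: inversions_def)
  ultimately show ?thesis by simp
qed

lemma card_inversions_inverse_le:
  assumes f: "f permutes {1..n}" and gf: "\<And>x. g (f x) = x"
  shows "card (inversions n f) \<le> card (inversions n g)"
proof (rule card_inj_on_le)
  show "inj_on (\<lambda>(a, b). (f b, f a)) (inversions n f)"
    by (auto simp: inj_on_def inj_eq[OF permutes_inj[OF f]])
  show "(\<lambda>(a, b). (f b, f a)) ` inversions n f \<subseteq> inversions n g"
    using permutes_in_image[OF f] gf by (auto simp: inversions_def)
qed simp

lemma card_inversions_inverse:
  assumes "f permutes {1..n}" "g permutes {1..n}" "\<And>x. g (f x) = x" "\<And>x. f (g x) = x"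
  shows "card (inversions n f) = card (inversions n g)"
  using card_inversions_inverse_le[of f n g] card_inversions_inverse_le[of g n f] assms by simp

lemma card_excedances_sref_comp:
  assumes w: "involution w" and i: "1 \<le> i" "i < n" and fixed: "w i = i" "w (Suc i) = Suc i"
  shows "card (excedances n (sref i \<circ> w)) = card (excedances n w) + 1"
proof -
  have out: "w a \<noteq> i \<and> w a \<noteq> Suc i" if "a \<noteq> i" "a \<noteq> Suc i" for a
    using that fixed involution_eq_iff[OF w] by metis
  have "a \<in> excedances n (sref i \<circ> w) \<longleftrightarrow> a \<in> insert i (excedances n w)" for a
    using i fixed out[of a] by (cases "a = i \<or> a = Suc i") (auto simp: excedances_def sref_apply)
  then have "excedances n (sref i \<circ> w) = insert i (excedances n w)"
    by blast
  moreover have "i \<notin> excedances n w" using fixed by (simp add: excedances_def)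
  ultimately show ?thesis by (simp add: excedances_def)
qed

lemma card_excedances_sref_conj:
  assumes w: "involution w" and i: "1 \<le> i" "i < n" and ns: "w i \<noteq> Suc i"
  shows "card (excedances n (sref i \<circ> w \<circ> sref i)) = card (excedances n w)"
proof -
  have ns': "w (Suc i) \<noteq> i" using ns involutionD[OF w, of "Suc i"] by metis
  have "sref i b < sref i (w b) \<longleftrightarrow> b < w b" for b
  proof (cases "w b = b")
    case False
    then show ?thesis using ns ns' by (intro sref_less_iff) auto
  qed simp
  then have "excedances n (sref i \<circ> w \<circ> sref i) = sref i ` excedances n w"
    using permutes_in_image[OF sref_permutes[OF i]]
    by (auto simp: excedances_def image_iff) (metis sref_sref)
  moreover have "inj (sref i)" by (metis injI sref_sref)
  ultimately show ?thesis by (simp add: card_image inj_on_subset)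
qed

lemma inv_exc_ascent:
  assumes w: "w \<in> Istar n" and i: "1 \<le> i" "i < n" and asc: "w i < w (Suc i)"
  shows "inv_exc n (ltimes i w) = inv_exc n w + 2"
proof -
  have iv: "involution w" using Istar_involution[OF w] .
  have pw: "w permutes {1..n}" using Istar_permutes[OF w] .
  have ps: "sref i permutes {1..n}" using sref_permutes[OF i] .
  have inv: "w (w k) = k" for k using involutionD[OF iv] .
  show ?thesis
  proof (cases "stabilises_pair i w")
    case True
    then have fixed: "w i = i" "w (Suc i) = Suc i"
      using asc inv[of i] by (auto simp: stabilises_pair_def)
    show ?thesis
      using card_inversions_sref_comp[OF pw i fixed] card_excedances_sref_comp[OF iv i fixed]
      by (simp add: ltimes_stabilises[OF iv True] inv_exc_def)
  next
    case False
    have ns: "w i \<noteq> Suc i" "\<not> (w i = i \<and> w (Suc i) = Suc i)"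
      using False by (auto simp: stabilises_pair_def)
    have "sref i (w i) < sref i (w (Suc i))"
      using sref_less_iff[of "w (Suc i)" "w i" i] ns asc inv[of i] by auto
    then have "card (inversions n (sref i \<circ> (w \<circ> sref i))) = card (inversions n (w \<circ> sref i)) + 1"
      using card_inversions_sref_comp[OF permutes_compose[OF ps pw] i,
          of "sref i (w i)" "sref i (w (Suc i))"] inv by simp
    also have "card (inversions n (w \<circ> sref i)) = card (inversions n (sref i \<circ> w))"
      by (rule card_inversions_inverse[OF permutes_compose[OF ps pw] permutes_compose[OF pw ps]])
        (simp_all add: inv)
    also have "\<dots> = card (inversions n w) + 1"
      using card_inversions_sref_comp[OF pw i, of "w i" "w (Suc i)"] inv asc by simp
    finally show ?thesis
      using card_excedances_sref_conj[OF iv i ns(1)]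
      by (simp add: ltimes_not_stabilises[OF iv False] inv_exc_def o_def)
  qed
qed

lemma inv_exc_descent:
  assumes w: "w \<in> Istar n" and i: "1 \<le> i" "i < n" and d: "w (Suc i) < w i"
  shows "inv_exc n w = inv_exc n (ltimes i w) + 2"
  using inv_exc_ascent[OF ltimes_Istar[OF w i] i] d
    ltimes_descent_iff[OF Istar_involution[OF w]] by simp

lemma descent_between:
  fixes f :: "nat \<Rightarrow> nat"
  shows "a < b \<Longrightarrow> f b < f a \<Longrightarrow> \<exists>k. a \<le> k \<and> k < b \<and> f (Suc k) < f k"
proof (induction b)
  case (Suc b)
  show ?case
  proof (cases "f (Suc b) < f b")
    case True
    with Suc.prems show ?thesis by (auto simp: less_Suc_eq_le)
  next
    case False
    with Suc.prems have "a < b" "f b < f a" by (auto simp: less_Suc_eq)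
    with Suc.IH show ?thesis using less_SucI by blast
  qed
qed simp

text \<open>The least point moved by \<open>f\<close> is sent upwards, and its preimage lies above it.\<close>

lemma permutes_descent:
  assumes f: "f permutes {1..n}" and "f \<noteq> id"
  obtains d where "1 \<le> d" "d < n" "f (Suc d) < f d"
proof -
  have "\<exists>k. f k \<noteq> k" using assms(2) by (auto simp: fun_eq_iff)
  define k where "k = (LEAST k. f k \<noteq> k)"
  have fk: "f k \<noteq> k" unfolding k_def using \<open>\<exists>k. f k \<noteq> k\<close> by (rule LeastI_ex)
  have below: "f j = j" if "j < k" for j using not_less_Least that k_def by blast
  have inj: "f a = f b \<longleftrightarrow> a = b" for a b
    using permutes_inj[OF f] by (auto dest: injD)
  have k: "k \<in> {1..n}" using fk permutes_not_in[OF f] by blast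
  obtain k' where k': "f k' = k" using permutes_surj[OF f] by (metis surjD)
  have "k' \<in> {1..n}" using k k' permutes_in_image[OF f] by blast
  moreover have "k < k'" using k' fk below inj by (metis linorder_neqE_nat)
  moreover have "k < f k" using fk below[of "f k"] inj by (metis linorder_neqE_nat)
  ultimately obtain d where "k \<le> d" "d < k'" "f (Suc d) < f d"
    using descent_between[of k k' f] k' by auto
  with k \<open>k' \<in> {1..n}\<close> show ?thesis by (intro that) auto
qed

lemma inv_exc_expr_val_le: "set xs \<subseteq> {1..<n} \<Longrightarrow> inv_exc n (expr_val xs) \<le> 2 * length xs"
proof (induction xs)
  case (Cons i xs)
  have u: "expr_val xs \<in> Istar n" using Cons.prems by (intro expr_val_Istar) simp
  have i: "1 \<le> i" "i < n" using Cons.prems by auto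
  have "expr_val xs i \<noteq> expr_val xs (Suc i)"
    using involution_eq_iff[OF Istar_involution[OF u]] by simp
  then consider "expr_val xs i < expr_val xs (Suc i)" | "expr_val xs (Suc i) < expr_val xs i"
    by linarith
  then show ?case
    using inv_exc_ascent[OF u i] inv_exc_descent[OF u i] Cons by cases fastforce+
qed simp

lemma ex_expr_inv_exc:
  "w \<in> Istar n \<Longrightarrow> \<exists>xs. set xs \<subseteq> {1..<n} \<and> expr_val xs = w \<and> 2 * length xs = inv_exc n w"
proof (induction "inv_exc n w" arbitrary: w rule: less_induct)
  case less
  show ?case
  proof (cases "w = id")
    case True
    then show ?thesis by (intro exI[of _ "[]"]) simp
  next
    case False
    then obtain d where d: "1 \<le> d" "d < n" "w (Suc d) < w d"
      using permutes_descent[OF Istar_permutes[OF less.prems]] by blast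
    have "inv_exc n w = inv_exc n (ltimes d w) + 2"
      using inv_exc_descent[OF less.prems d] .
    moreover obtain xs where "set xs \<subseteq> {1..<n}" "expr_val xs = ltimes d w"
      "2 * length xs = inv_exc n (ltimes d w)"
      using less.hyps[of "ltimes d w"] calculation ltimes_Istar[OF less.prems d(1,2)] by auto
    ultimately show ?thesis using d by (intro exI[of _ "d # xs"]) auto
  qed
qed

lemma reduced_Iexpr_iff:
  assumes w: "w \<in> Istar n"
  shows "reduced_Iexpr n xs w \<longleftrightarrow> set xs \<subseteq> {1..<n} \<and> expr_val xs = w \<and> 2 * length xs = inv_exc n w"
proof
  assume r: "reduced_Iexpr n xs w"
  obtain ys where ys: "set ys \<subseteq> {1..<n}" "expr_val ys = w" "2 * length ys = inv_exc n w"
    using ex_expr_inv_exc[OF w] by blast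
  have "length xs \<le> length ys" using r ys by (auto simp: reduced_Iexpr_def is_Iexpr_def)
  moreover have "inv_exc n w \<le> 2 * length xs"
    using r inv_exc_expr_val_le by (auto simp: reduced_Iexpr_def is_Iexpr_def)
  ultimately show "set xs \<subseteq> {1..<n} \<and> expr_val xs = w \<and> 2 * length xs = inv_exc n w"
    using r ys by (auto simp: reduced_Iexpr_def is_Iexpr_def)
next
  assume "set xs \<subseteq> {1..<n} \<and> expr_val xs = w \<and> 2 * length xs = inv_exc n w"
  then show "reduced_Iexpr n xs w"
    using inv_exc_expr_val_le by (fastforce simp: reduced_Iexpr_def is_Iexpr_def)
qed
lemma reduced_Iexpr_Istar: "reduced_Iexpr n xs w \<Longrightarrow> w \<in> Istar n"
  unfolding reduced_Iexpr_def is_Iexpr_def using expr_val_Istar by blast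

lemma ex_reduced_Iexpr: "w \<in> Istar n \<Longrightarrow> \<exists>xs. reduced_Iexpr n xs w"
  using ex_expr_inv_exc reduced_Iexpr_iff by blast

lemma reduced_Iexpr_length_eq:
  "reduced_Iexpr n xs w \<Longrightarrow> reduced_Iexpr n ys w \<Longrightarrow> length xs = length ys"
  unfolding reduced_Iexpr_def by (meson le_antisym)

lemma reduced_Iexpr_same_length:
  assumes "reduced_Iexpr n xs w" "set ys \<subseteq> {1..<n}" "expr_val ys = w" "length ys = length xs"
  shows "reduced_Iexpr n ys w"
  using assms by (simp add: reduced_Iexpr_def is_Iexpr_def)

lemma reduced_Iexpr_Cons:
  assumes w: "w \<in> Istar n" and i: "1 \<le> i" "i < n" and d: "w (Suc i) < w i"
    and c: "reduced_Iexpr n c (ltimes i w)"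
  shows "reduced_Iexpr n (i # c) w"
  using c i inv_exc_descent[OF w i d]
  by (simp add: reduced_Iexpr_iff[OF w] reduced_Iexpr_iff[OF ltimes_Istar[OF w i]])

lemma reduced_Iexpr_ConsD:
  assumes r: "reduced_Iexpr n (i # c) w"
  shows "1 \<le> i" "i < n" "w (Suc i) < w i" "reduced_Iexpr n c (ltimes i w)"
proof -
  have w: "w \<in> Istar n" using reduced_Iexpr_Istar[OF r] .
  have h: "set (i # c) \<subseteq> {1..<n}" "ltimes i (expr_val c) = w" "2 * Suc (length c) = inv_exc n w"
    using r reduced_Iexpr_iff[OF w] by auto
  show i: "1 \<le> i" "i < n" using h by auto
  define u where "u = expr_val c"
  have u: "u \<in> Istar n" unfolding u_def using h by (intro expr_val_Istar) simp
  have "\<not> u (Suc i) < u i"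
  proof
    assume "u (Suc i) < u i"
    then have "inv_exc n u = inv_exc n w + 2"
      using inv_exc_descent[OF u i] h(2) u_def by simp
    moreover have "inv_exc n u \<le> 2 * length c"
      unfolding u_def using h inv_exc_expr_val_le by simp
    ultimately show False using h(3) by simp
  qed
  then have asc: "u i < u (Suc i)"
    using involution_eq_iff[OF Istar_involution[OF u], of i "Suc i"] by (metis linorder_neqE_nat n_not_Suc_n)
  show "w (Suc i) < w i"
    using ltimes_descent_iff[OF Istar_involution[OF w], of i] asc h(2) u_def by auto
  show "reduced_Iexpr n c (ltimes i w)"
    using inv_exc_ascent[OF u i asc] h reduced_Iexpr_iff[OF u] u_def by auto
qed

section \<open>Braid moves\<close>

definition braid_pattern :: "nat \<Rightarrow> nat list \<Rightarrow> nat list \<Rightarrow> bool" where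
  "braid_pattern n xs ys \<longleftrightarrow>
     (\<exists>a b j. 1 \<le> j \<and> j + 1 < n \<and>
        ((xs = a @ [j, j+1, j] @ b \<and> ys = a @ [j+1, j, j+1] @ b) \<or>
         (xs = a @ [j+1, j, j+1] @ b \<and> ys = a @ [j, j+1, j] @ b)))
    \<or> (\<exists>a c b d. (b > d + 1 \<or> d > b + 1) \<and>
        xs = a @ [b, d] @ c \<and> ys = a @ [d, b] @ c)
    \<or> (\<exists>a k. 1 \<le> k \<and> k + 1 < n \<and>
        ((xs = a @ [k, k+1] \<and> ys = a @ [k+1, k]) \<or>
         (xs = a @ [k+1, k] \<and> ys = a @ [k, k+1])))"

lemma braid_step_iff:
  "braid_step n xs ys \<longleftrightarrow>
     reduced_Iexpr n xs (expr_val xs) \<and> reduced_Iexpr n ys (expr_val ys) \<and> braid_pattern n xs ys"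
  unfolding braid_step_def braid_pattern_def ..

lemma braid_pattern_sym: "braid_pattern n xs ys \<Longrightarrow> braid_pattern n ys xs"
  unfolding braid_pattern_def by blast

lemma braid_pattern_prepend:
  assumes "braid_pattern n xs ys"
  shows "braid_pattern n (a @ xs) (a @ ys)"
proof -
  consider (braid) a' b j where "1 \<le> j" "j + 1 < n"
      "(xs = a' @ [j, j+1, j] @ b \<and> ys = a' @ [j+1, j, j+1] @ b) \<or>
       (xs = a' @ [j+1, j, j+1] @ b \<and> ys = a' @ [j, j+1, j] @ b)"
    | (commute) a' c b d where "b > d + 1 \<or> d > b + 1" "xs = a' @ [b, d] @ c" "ys = a' @ [d, b] @ c"
    | (final) a' k where "1 \<le> k" "k + 1 < n"
      "(xs = a' @ [k, k+1] \<and> ys = a' @ [k+1, k]) \<or> (xs = a' @ [k+1, k] \<and> ys = a' @ [k, k+1])"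
    using assms unfolding braid_pattern_def by blast
  then show ?thesis
  proof cases
    case braid
    then show ?thesis unfolding braid_pattern_def
      by (intro disjI1 exI[of _ "a @ a'"] exI[of _ b] exI[of _ j]) auto
  next
    case commute
    then show ?thesis unfolding braid_pattern_def
      by (intro disjI2 disjI1 exI[of _ "a @ a'"] exI[of _ c] exI[of _ b] exI[of _ d]) auto
  next
    case final
    then show ?thesis unfolding braid_pattern_def
      by (intro disjI2 exI[of _ "a @ a'"] exI[of _ k]) auto
  qed
qed

lemma braid_pattern_braid: "1 \<le> j \<Longrightarrow> Suc j < n \<Longrightarrow> braid_pattern n (j # Suc j # j # c) (Suc j # j # Suc j # c)"
  unfolding braid_pattern_def by (intro disjI1 exI[of _ "[]"] exI[of _ c] exI[of _ j]) simp

lemma braid_pattern_commute: "Suc i < j \<Longrightarrow> braid_pattern n (i # j # c) (j # i # c)"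
  unfolding braid_pattern_def by (intro disjI2 disjI1 exI[of _ "[]"] exI[of _ c] exI[of _ i] exI[of _ j]) simp

lemma braid_pattern_final: "1 \<le> k \<Longrightarrow> Suc k < n \<Longrightarrow> braid_pattern n [k, Suc k] [Suc k, k]"
  unfolding braid_pattern_def by (intro disjI2 exI[of _ "[]"] exI[of _ k]) simp

definition braid_conn :: "nat \<Rightarrow> (nat \<Rightarrow> nat) \<Rightarrow> nat list \<Rightarrow> nat list \<Rightarrow> bool" where
  "braid_conn n w = (\<lambda>u v. braid_pattern n u v \<and> reduced_Iexpr n u w \<and> reduced_Iexpr n v w)\<^sup>*\<^sup>*"

lemma braid_conn_refl: "braid_conn n w xs xs"
  by (simp add: braid_conn_def)

lemma braid_conn_step:
  "braid_pattern n u v \<Longrightarrow> reduced_Iexpr n u w \<Longrightarrow> reduced_Iexpr n v w \<Longrightarrow> braid_conn n w u v"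
  unfolding braid_conn_def by (rule r_into_rtranclp) simp

lemma braid_conn_trans: "braid_conn n w xs ys \<Longrightarrow> braid_conn n w ys zs \<Longrightarrow> braid_conn n w xs zs"
  unfolding braid_conn_def by (rule rtranclp_trans)

lemma braid_conn_sym: "braid_conn n w xs ys \<Longrightarrow> braid_conn n w ys xs"
  unfolding braid_conn_def
proof (induction rule: rtranclp_induct)
  case (step u v)
  then show ?case
    by (metis (mono_tags, lifting) braid_pattern_sym converse_rtranclp_into_rtranclp)
qed simp

lemma braid_conn_prepend:
  assumes c: "braid_conn n u xs ys" and rx: "reduced_Iexpr n xs u" and ra: "reduced_Iexpr n (a @ xs) w"
  shows "braid_conn n w (a @ xs) (a @ ys)"
proof -
  have red: "reduced_Iexpr n (a @ v) w" if v: "reduced_Iexpr n v u" for v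
  proof (rule reduced_Iexpr_same_length[OF ra])
    show "expr_val (a @ v) = w"
      using ra rx v by (auto simp: reduced_Iexpr_def is_Iexpr_def expr_val_append)
    show "length (a @ v) = length (a @ xs)"
      using reduced_Iexpr_length_eq[OF rx v] by simp
  qed (use ra v in \<open>auto simp: reduced_Iexpr_def is_Iexpr_def\<close>)
  show ?thesis
    using c unfolding braid_conn_def
  proof (induction rule: rtranclp_induct)
    case (step v v')
    then show ?case
      using red[of v] red[of v'] braid_pattern_prepend[of n v v' a]
      by (simp add: rtranclp.rtrancl_into_rtrancl)
  qed simp
qed

lemma braid_conn_imp_braid_steps:
  assumes "braid_conn n w xs ys"
  shows "(\<lambda>u v. braid_step n u v \<and> reduced_Iexpr n v w)\<^sup>*\<^sup>* xs ys"
  using assms unfolding braid_conn_def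
proof (induction rule: rtranclp_induct)
  case (step u v)
  then have "braid_step n u v"
    by (auto simp: braid_step_iff reduced_Iexpr_def is_Iexpr_def)
  with step show ?case by (simp add: rtranclp.rtrancl_into_rtrancl)
qed simp

section \<open>Connecting different first letters\<close>

definition linked :: "nat \<Rightarrow> (nat \<Rightarrow> nat) \<Rightarrow> nat \<Rightarrow> nat \<Rightarrow> bool" where
  "linked n w i j \<longleftrightarrow>
     (\<exists>p q. reduced_Iexpr n (i # p) w \<and> reduced_Iexpr n (j # q) w \<and> braid_conn n w (i # p) (j # q))"

definition first_letter_connected :: "nat \<Rightarrow> (nat \<Rightarrow> nat) \<Rightarrow> bool" where
  "first_letter_connected n w \<longleftrightarrow>
     (\<forall>i p q. reduced_Iexpr n (i # p) w \<longrightarrow> reduced_Iexpr n (i # q) w \<longrightarrow> braid_conn n w (i # p) (i # q))"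

lemma linked_sym: "linked n w i j \<Longrightarrow> linked n w j i"
  unfolding linked_def using braid_conn_sym by blast

lemma linked_trans:
  "first_letter_connected n w \<Longrightarrow> linked n w i j \<Longrightarrow> linked n w j k \<Longrightarrow> linked n w i k"
  unfolding linked_def first_letter_connected_def by (meson braid_conn_trans)

lemma linked_refl:
  assumes w: "w \<in> Istar n" and i: "1 \<le> i" "i < n" and d: "w (Suc i) < w i"
  shows "linked n w i i"
proof -
  obtain c where "reduced_Iexpr n c (ltimes i w)"
    using ex_reduced_Iexpr[OF ltimes_Istar[OF w i]] by blast
  then have "reduced_Iexpr n (i # c) w" using reduced_Iexpr_Cons[OF w i d] by blast
  then show ?thesis unfolding linked_def using braid_conn_refl by blast
qed

lemma linked_by_pattern:
  "reduced_Iexpr n (i # p) w \<Longrightarrow> reduced_Iexpr n (j # q) w \<Longrightarrow> braid_pattern n (i # p) (j # q) \<Longrightarrow>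
    linked n w i j"
  unfolding linked_def by (blast intro: braid_conn_step)

lemma linked_far:
  assumes w: "w \<in> Istar n" and ij: "1 \<le> i" "Suc i < j" "j < n"
    and di: "w (Suc i) < w i" and dj: "w (Suc j) < w j"
    and nn: "\<not> (w j = Suc i \<and> w (Suc j) = i)"
  shows "linked n w i j"
proof -
  have iv: "involution w" using Istar_involution[OF w] .
  have i: "i < n" "1 \<le> j" using ij by auto
  define u where "u = ltimes i w"
  have u: "u \<in> Istar n" unfolding u_def using ltimes_Istar[OF w ij(1) i(1)] .
  have "u (Suc j) < u j"
  proof -
    have "u j = sref i (w j)" "u (Suc j) = sref i (w (Suc j))"
      using ij by (simp_all add: u_def ltimes_apply_other[OF iv])
    moreover have "sref i (w (Suc j)) < sref i (w j)"
      using dj nn by (subst sref_less_iff) auto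
    ultimately show ?thesis by simp
  qed
  obtain c where c: "reduced_Iexpr n c (ltimes j u)"
    using ex_reduced_Iexpr[OF ltimes_Istar[OF u i(2) ij(3)]] by blast
  have r1: "reduced_Iexpr n (i # j # c) w"
    using reduced_Iexpr_Cons[OF w ij(1) i(1) di] reduced_Iexpr_Cons[OF u i(2) ij(3) \<open>u (Suc j) < u j\<close> c]
    by (simp add: u_def)
  have "expr_val (j # i # c) = w"
    using c ltimes_commute_far[OF involution_ltimes[OF iv] ij(2), of j]
    by (simp add: u_def reduced_Iexpr_def is_Iexpr_def)
  then have r2: "reduced_Iexpr n (j # i # c) w"
    using r1 i by (intro reduced_Iexpr_same_length[OF r1]) (auto simp: reduced_Iexpr_def is_Iexpr_def)
  show ?thesis using linked_by_pattern[OF r1 r2 braid_pattern_commute[OF ij(2)]] .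
qed

lemma linked_braid:
  assumes w: "w \<in> Istar n" and x: "1 \<le> x" "Suc x < n"
    and d0: "w (Suc x) < w x" and e0: "w (Suc (Suc x)) < w (Suc x)" and ne: "w x \<noteq> Suc (Suc x)"
  shows "linked n w x (Suc x)"
proof -
  have iv: "involution w" using Istar_involution[OF w] .
  have x': "x < n" "1 \<le> Suc x" using x by auto
  define u1 where "u1 = ltimes x w"
  define u2 where "u2 = ltimes (Suc x) u1"
  have u1: "u1 \<in> Istar n" unfolding u1_def using ltimes_Istar[OF w x(1) x'(1)] .
  have u2: "u2 \<in> Istar n" unfolding u2_def using ltimes_Istar[OF u1 x'(2) x(2)] .
  obtain c where c: "reduced_Iexpr n c (ltimes x u2)"
    using ex_reduced_Iexpr[OF ltimes_Istar[OF u2 x(1) x'(1)]] by blast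
  have r1: "reduced_Iexpr n (x # Suc x # x # c) w"
    using reduced_Iexpr_Cons[OF w x(1) x'(1) d0] reduced_Iexpr_Cons[OF u1 x'(2) x(2)]
      reduced_Iexpr_Cons[OF u2 x(1) x'(1)] braid_descents[OF iv d0 e0 ne] c
    by (simp add: u1_def u2_def)
  have "expr_val (Suc x # x # Suc x # c) = w"
    using c braid_ltimes[OF iv d0 e0 ne] by (simp add: u1_def u2_def reduced_Iexpr_def is_Iexpr_def)
  then have r2: "reduced_Iexpr n (Suc x # x # Suc x # c) w"
    using r1 x by (intro reduced_Iexpr_same_length[OF r1]) (auto simp: reduced_Iexpr_def is_Iexpr_def)
  show ?thesis using linked_by_pattern[OF r1 r2 braid_pattern_braid[OF x]] .
qed

lemma linked_exceptional_descent:
  fixes w :: "nat \<Rightarrow> nat" and x :: nat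
  defines "v \<equiv> \<lambda>y. if y \<in> {x, Suc x, Suc (Suc x)} then y else w y"
  assumes w: "w \<in> Istar n" and x: "1 \<le> x" "Suc x < n"
    and E: "w x = Suc (Suc x)" "w (Suc x) = Suc x" and SF: "first_letter_connected n w"
    and d: "1 \<le> d" "d < n" "v (Suc d) < v d"
  shows "linked n w x (Suc x)"
proof -
  have iv: "involution w" using Istar_involution[OF w] .
  have c: "w (Suc (Suc x)) = x" using involutionD[OF iv, of x] E by simp
  have out: "w y \<notin> {x, Suc x, Suc (Suc x)}" if "y \<notin> {x, Suc x, Suc (Suc x)}" for y
    using that involutionD[OF iv, of y] E c by auto
  have d0: "w (Suc x) < w x" and e0: "w (Suc (Suc x)) < w (Suc x)" using E c by simp_all
  have "x < n" using x by simp
  have "d \<noteq> x" "d \<noteq> Suc x" using d(3) by (auto simp: v_def)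
  then consider (below) "Suc d < x" | (left) "Suc d = x" | (right) "d = Suc (Suc x)"
    | (above) "Suc (Suc x) < d"
    by linarith
  then show ?thesis
  proof cases
    case below
    then have "w (Suc d) < w d" using d(3) by (simp add: v_def)
    then have "linked n w d x" "linked n w d (Suc x)"
      using linked_far[OF w d(1) _ \<open>x < n\<close>] linked_far[OF w d(1) _ x(2)] below d0 e0 E by simp_all
    then show ?thesis using linked_trans[OF SF] linked_sym by blast
  next
    case left
    then have "Suc (Suc x) < w d" using d(3) out[of d] by (auto simp: v_def)
    then have "linked n w d x" "linked n w d (Suc x)"
      using linked_braid[OF w d(1)] linked_far[OF w d(1) _ x(2)] left x d0 e0 E by auto
    then show ?thesis using linked_trans[OF SF] linked_sym by blast
  next
    case right
    then have "w (Suc (Suc (Suc x))) < x"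
      using d(3) out[of "Suc (Suc (Suc x))"] by (auto simp: v_def)
    then have "linked n w (Suc x) (Suc (Suc x))" "linked n w x (Suc (Suc x))"
      using linked_braid[OF w _ _ e0] linked_far[OF w x(1) _ _ d0] right d(2) E c by auto
    then show ?thesis using linked_trans[OF SF] linked_sym by blast
  next
    case above
    then have "w (Suc d) < w d" "w d \<notin> {x, Suc x, Suc (Suc x)}"
      using d(3) out[of d] by (auto simp: v_def)
    then have "linked n w x d" "linked n w (Suc x) d"
      using linked_far[OF w x(1) _ d(2) d0] linked_far[OF w _ _ d(2) e0] above by auto
    then show ?thesis using linked_trans[OF SF] linked_sym by blast
  qed
qed

text \<open>If \<open>w x = x + 2\<close> the braid relation is not available. Instead \<open>s\<^sub>x, s\<^sub>x\<^sub>+\<^sub>1\<close> and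
  \<open>s\<^sub>x\<^sub>+\<^sub>1, s\<^sub>x\<close> lead to the same \<open>v\<close>; either \<open>v = 1\<close> and the terminal move applies, or a
  descent of \<open>v\<close> is a descent of \<open>w\<close> linked to both \<open>x\<close> and \<open>x + 1\<close>.\<close>

lemma linked_exceptional:
  assumes w: "w \<in> Istar n" and x: "1 \<le> x" "Suc x < n"
    and d0: "w (Suc x) < w x" and e0: "w (Suc (Suc x)) < w (Suc x)"
    and E: "w x = Suc (Suc x)" and SF: "first_letter_connected n w"
  shows "linked n w x (Suc x)"
proof -
  have iv: "involution w" using Istar_involution[OF w] .
  have x': "x < n" "1 \<le> Suc x" using x by auto
  have b: "w (Suc x) = Suc x" using d0 e0 E involutionD[OF iv, of x] by simp
  define v where "v = (\<lambda>y. if y \<in> {x, Suc x, Suc (Suc x)} then y else w y)"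
  note exc = ltimes_exceptional[OF iv E b, folded v_def]
  have v: "v \<in> Istar n"
    using ltimes_Istar[OF ltimes_Istar[OF w x(1) x'(1)] x'(2) x(2)] exc(1) by simp
  show ?thesis
  proof (cases "v = id")
    case True
    then have "reduced_Iexpr n [] v" using reduced_Iexpr_iff[OF v] by simp
    then have "reduced_Iexpr n [x, Suc x] w" "reduced_Iexpr n [Suc x, x] w"
      using reduced_Iexpr_Cons[OF w x(1) x'(1) d0] reduced_Iexpr_Cons[OF w x'(2) x(2) e0]
        reduced_Iexpr_Cons[OF ltimes_Istar[OF w x(1) x'(1)] x'(2) x(2) exc(3)]
        reduced_Iexpr_Cons[OF ltimes_Istar[OF w x'(2) x(2)] x(1) x'(1) exc(4)] exc(1,2)
      by simp_all
    then show ?thesis using linked_by_pattern braid_pattern_final[OF x] by blast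
  next
    case False
    then obtain d where "1 \<le> d" "d < n" "v (Suc d) < v d"
      using permutes_descent[OF Istar_permutes[OF v]] by blast
    then show ?thesis
      using linked_exceptional_descent[OF w x E b SF] by (simp add: v_def)
  qed
qed

lemma linked_descents:
  assumes w: "w \<in> Istar n" and SF: "first_letter_connected n w"
  shows "1 \<le> i \<Longrightarrow> i < j \<Longrightarrow> j < n \<Longrightarrow> w (Suc i) < w i \<Longrightarrow> w (Suc j) < w j \<Longrightarrow> linked n w i j"
proof (induction "j - i" arbitrary: i j rule: less_induct)
  case less
  consider (adjacent) "j = Suc i" | (far) "Suc i < j" using less.prems by linarith
  then show ?case
  proof cases
    case adjacent
    then show ?thesis
      using linked_braid[OF w] linked_exceptional[OF w _ _ _ _ _ SF] less.prems by fastforce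
  next
    case far
    show ?thesis
    proof (cases "w j = Suc i \<and> w (Suc j) = i")
      case True
      then have "w (Suc i) = j" using involutionD[OF Istar_involution[OF w], of j] by simp
      then obtain k where k: "Suc i \<le> k" "k < j" "w (Suc k) < w k"
        using descent_between[of "Suc i" j w] far True by auto
      then have "linked n w i k" "linked n w k j"
        using less.hyps[of k i] less.hyps[of j k] less.prems by simp_all
      then show ?thesis using linked_trans[OF SF] by blast
    next
      case False
      then show ?thesis using linked_far[OF w less.prems(1) far less.prems(3-5)] by simp
    qed
  qed
qed

text \<open>Induction on the length: the hypothesis for \<open>s\<^sub>i \<ltimes> w\<close> makes reduced expressions with
  the same first letter braid equivalent, and \<open>linked_descents\<close> joins different first letters.\<close>

lemma braid_conn_reduced:
  "reduced_Iexpr n xs w \<Longrightarrow> reduced_Iexpr n ys w \<Longrightarrow> braid_conn n w xs ys"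
proof (induction "length xs" arbitrary: w xs ys)
  case 0
  then have "xs = ys" using reduced_Iexpr_length_eq[OF 0(2,3)] by simp
  then show ?case by (simp add: braid_conn_refl)
next
  case (Suc m)
  have w: "w \<in> Istar n" using reduced_Iexpr_Istar[OF Suc.prems(1)] .
  have SF: "first_letter_connected n w" unfolding first_letter_connected_def
  proof (intro allI impI)
    fix k p q assume rp: "reduced_Iexpr n (k # p) w" and rq: "reduced_Iexpr n (k # q) w"
    have "m = length p" using reduced_Iexpr_length_eq[OF Suc.prems(1) rp] Suc.hyps(2) by simp
    then have "braid_conn n (ltimes k w) p q"
      using Suc.hyps(1) reduced_Iexpr_ConsD(4)[OF rp] reduced_Iexpr_ConsD(4)[OF rq] by blast
    then show "braid_conn n w (k # p) (k # q)"
      using braid_conn_prepend[of n _ p q "[k]"] reduced_Iexpr_ConsD(4)[OF rp] rp by simp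
  qed
  obtain i p where xs: "xs = i # p" using Suc.hyps(2) by (cases xs) auto
  obtain j q where ys: "ys = j # q"
    using reduced_Iexpr_length_eq[OF Suc.prems] Suc.hyps(2) by (cases ys) auto
  note di = reduced_Iexpr_ConsD[OF Suc.prems(1)[unfolded xs]]
    and dj = reduced_Iexpr_ConsD[OF Suc.prems(2)[unfolded ys]]
  have "linked n w i j"
  proof (cases rule: linorder_cases[of i j])
    case less
    show ?thesis using linked_descents[OF w SF di(1) less dj(2) di(3) dj(3)] .
  next
    case equal
    then show ?thesis using linked_refl[OF w di(1-3)] by simp
  next
    case greater
    show ?thesis using linked_sym[OF linked_descents[OF w SF dj(1) greater di(2) dj(3) di(3)]] .
  qed
  then obtain p' q' where r': "reduced_Iexpr n (i # p') w" "reduced_Iexpr n (j # q') w"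
    and conn: "braid_conn n w (i # p') (j # q')"
    unfolding linked_def by blast
  have "braid_conn n w xs (i # p')" "braid_conn n w (j # q') ys"
    using SF Suc.prems r' unfolding first_letter_connected_def xs ys by blast+
  with conn show ?case by (blast intro: braid_conn_trans)
qed

theorem theorem3p1:
  fixes n :: nat and w :: "nat \<Rightarrow> nat" and xs ys :: "nat list"
  assumes "w \<in> Istar n"
    and "reduced_Iexpr n xs w"
    and "reduced_Iexpr n ys w"
  shows "(\<lambda>u v. braid_step n u v \<and> reduced_Iexpr n v w)\<^sup>*\<^sup>* xs ys"
  using braid_conn_imp_braid_steps[OF braid_conn_reduced[OF assms(2,3)]] .

end
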